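(* Let $m,L,T$ be positive integers with $T \ge (m+1)L-1$, let $k$ be an integer, and let $u_{k-T},u_{k-T+1},\dots,u_k \in \mathbb{R}^m$. Suppose that the signal $u_{[k-T,k-1]}$ is persistently exciting of order $L$. Write the Hankel matrix of $u_{[k-T+1,k]}$ in block form $$\mathcal{H}_L(u_{[k-T+1,k]}) = \begin{bmatrix} H_{11,k} & H_{12,k}\\ H_{21,k} & u_k\end{bmatrix}$$ as described in the context. Then: (i) $\operatorname{rank}\begin{bmatrix} H_{11,k} & H_{12,k}\end{bmatrix} = mL-m$, i.e. $\begin{bmatrix} H_{11,k} & H_{12,k}\end{bmatrix}$ has linearly independent rows; (ii) $mL-1 \le \operatorname{rank}\begin{bmatrix} H_{11,k}\\ H_{21,k}\end{bmatrix} \le mL$; (iii) $mL-1 \le \operatorname{rank}\,\mathcal{H}_L(u_{[k-T+1,k]}) \le mL$.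
   Context: For vectors $u_i\in\mathbb{R}^m$, $u_{[i,j]}$ denotes the stacked vector $(u_i^\top,\dots,u_j^\top)^\top \in \mathbb{R}^{(j-i+1)m}$. The (block) Hankel matrix of depth $L$ of a signal $u_{[k-T+1,k]}$ is the $mL\times(T-L+1)$ matrix $$\mathcal{H}_L(u_{[k-T+1,k]}) = \begin{bmatrix} u_{k-T+1} & u_{k-T+2} & \cdots & u_{k-L+1}\\ u_{k-T+2} & u_{k-T+3} & \cdots & u_{k-L+2}\\ \vdots & \vdots & & \vdots\\ u_{k-T+L} & u_{k-T+L+1} & \cdots & u_k\end{bmatrix},$$ whose $(i,j)$ block entry is $u_{k-T+i+j-1}$ ($i=1,\dots,L$, $j=1,\dots,T-L+1$). It is partitioned as $\begin{bmatrix} H_{11,k} & H_{12,k}\\ H_{21,k} & u_k\end{bmatrix}$, where $H_{11,k}\in\mathbb{R}^{m(L-1)\times(T-L)}$ consists of the first $m(L-1)$ rows and first $T-L$ columns, $H_{12,k}\in\mathbb{R}^{m(L-1)}$ is the first $m(L-1)$ entries of the last column, $H_{21,k}\in\mathbb{R}^{m\times(T-L)}$ is the last $m$ rows of the first $T-L$ columns, and the bottom-right block is $u_k$. The Hankel matrix of $u_{[k-T,k-1]}$ is defined analogously with all indices shifted by $-1$. A signal $u_{[s-T+1,s]}$ is persistently exciting of order $L$ if $\operatorname{rank}\mathcal{H}_L(u_{[s-T+1,s]}) = mL$. *)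

theory Defs
  imports "Jordan_Normal_Form.DL_Rank"
begin

text \<open>Block Hankel matrix of depth L of the signal u_[s-T+1, s], each u_j in R^m
  (a JNF vector of dimension m). The (i,j) block (0-based) is u_(s-T+1+i+j);
  row r belongs to block i = r div m, component r mod m.\<close>
definition hankel :: "nat \<Rightarrow> nat \<Rightarrow> nat \<Rightarrow> (int \<Rightarrow> real vec) \<Rightarrow> int \<Rightarrow> real mat" where
  "hankel m L T u s = mat (m * L) (T - L + 1)
     (\<lambda>(r, c). u (s - int T + 1 + int c + int (r div m)) $ (r mod m))"

definition top_rows :: "nat \<Rightarrow> 'a mat \<Rightarrow> 'a mat" where
  "top_rows p A = mat p (dim_col A) (\<lambda>(r, c). A $$ (r, c))"

definition left_cols :: "nat \<Rightarrow> 'a mat \<Rightarrow> 'a mat" where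
  "left_cols q A = mat (dim_row A) q (\<lambda>(r, c). A $$ (r, c))"

text \<open>Rank of a real matrix (dimension of its column space; equals row rank).\<close>
definition mrank :: "real mat \<Rightarrow> nat" where
  "mrank A = vec_space.rank (dim_row A) A"

definition persistently_exciting :: "nat \<Rightarrow> nat \<Rightarrow> nat \<Rightarrow> (int \<Rightarrow> real vec) \<Rightarrow> int \<Rightarrow> bool" where
  "persistently_exciting m L T u s \<longleftrightarrow> mrank (hankel m L T u s) = m * L"

end

theory Submission
  imports Defs
begin

text \<open>Moving the window from \<open>k - 1\<close> to \<open>k\<close> shifts the Hankel matrix up by one block row
  and left by one column. So the top \<open>m (L - 1)\<close> rows of the new matrix are a block of rows of
  the old one, which has full row rank, hence they have full row rank as well. Conversely, every
  column of the old matrix except the first is among the first \<open>T - L\<close> columns of the new one;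
  since a single column contributes at most one to the rank, these columns have rank at least
  \<open>m L - 1\<close>, and so does the whole new matrix.\<close>

context vec_space
begin

lemma rank_le_if_cols_in_span:
  assumes A: "A \<in> carrier_mat n nc" and B: "B \<in> carrier_mat n nc'"
    and cols_B: "set (cols B) \<subseteq> span (set (cols A))"
  shows "rank B \<le> rank A"
proof -
  have sA: "subspace class_ring (span (set (cols A))) V"
    using A by (metis cols_dim carrier_matD(1) span_is_subspace)
  have sB: "subspace class_ring (span (set (cols B))) V"
    using B by (metis cols_dim carrier_matD(1) span_is_subspace)
  have "span (set (cols B)) \<subseteq> span (set (cols A))"
    using cols_B A by (metis cols_dim carrier_matD(1) span_is_submodule span_is_subset)
  then have "subspace class_ring (span (set (cols B))) (vs (span (set (cols A))))"
    using nested_subspaces[OF sA sB] by blast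
  then show ?thesis
    unfolding rank_def
    using vectorspace.subspace_dim[OF subspace_is_vs[OF sA] _ fin_dim_span_cols[OF A]]
      fin_dim_span_cols[OF B]
    by auto
qed

lemma rank_le_if_cols_subset:
  assumes A: "A \<in> carrier_mat n nc" and B: "B \<in> carrier_mat n nc'"
    and cols_B: "set (cols B) \<subseteq> insert (0\<^sub>v n) (set (cols A))"
  shows "rank B \<le> rank A"
proof (rule rank_le_if_cols_in_span[OF A B])
  have "set (cols A) \<subseteq> carrier_vec n"
    using A cols_dim by blast
  moreover have "0\<^sub>v n \<in> span (set (cols A))"
    using submodule.zero_closed[OF span_is_submodule[OF calculation]] by simp
  ultimately show "set (cols B) \<subseteq> span (set (cols A))"
    using cols_B in_own_span by blast
qed

lemma rank_le_dim_row:
  assumes A: "A \<in> carrier_mat n nc"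
  shows "rank A \<le> n"
proof -
  have "subspace class_ring (span (set (cols A))) V"
    using A by (metis cols_dim carrier_matD(1) span_is_subspace)
  then show ?thesis
    unfolding rank_def using subspace_dim fin_dim_span_cols[OF A] dim_is_n by simp
qed

lemma span_cols_eq_carrier_if_rank_eq_dim_row:
  assumes A: "A \<in> carrier_mat n nc" and rank: "rank A = n"
  shows "span (set (cols A)) = carrier_vec n"
proof -
  have lin_indpt_empty: "lin_indpt {}"
    by (metis empty_subsetI fin_dim finite_basis_exists subset_li_is_li vec_vs vectorspace.basis_def)
  obtain U where U: "finite U" "maximal U (\<lambda>T. T \<subseteq> set (cols A) \<and> lin_indpt T)"
    using maximal_exists_superset[of "set (cols A)" "\<lambda>T. T \<subseteq> set (cols A) \<and> lin_indpt T" "{}"]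
      lin_indpt_empty by auto
  have U_cols: "U \<subseteq> set (cols A)" and U_indpt: "lin_indpt U"
    using U(2) unfolding maximal_def by auto
  have "U \<subseteq> carrier V"
    using U_cols A cols_dim by (metis carrier_matD(1) subset_trans module_vec_simps(3))
  moreover have "card U = dim"
    using rank_card_indpt[OF A U(2)] rank dim_is_n by simp
  ultimately have "basis U"
    using dim_li_is_basis U(1) U_indpt by simp
  then have "carrier V \<subseteq> span (set (cols A))"
    using span_is_monotone[OF U_cols] unfolding basis_def by auto
  moreover have "span (set (cols A)) \<subseteq> carrier V"
    using span_is_subset2 A cols_dim[of A] by simp
  ultimately show ?thesis
    by simp
qed

lemma rank_eq_dim_row_iff_surj:
  assumes A: "A \<in> carrier_mat n nc"
  shows "rank A = n \<longleftrightarrow> (\<forall>y\<in>carrier_vec n. \<exists>x\<in>carrier_vec nc. A *\<^sub>v x = y)"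
proof -
  have image: "span (set (cols A)) = {y\<in>carrier_vec n. \<exists>x\<in>carrier_vec nc. A *\<^sub>v x = y}"
    using col_space_eq[OF A] A unfolding col_space_def by auto
  show ?thesis
  proof
    assume "rank A = n"
    then show "\<forall>y\<in>carrier_vec n. \<exists>x\<in>carrier_vec nc. A *\<^sub>v x = y"
      using span_cols_eq_carrier_if_rank_eq_dim_row[OF A] image by blast
  next
    assume "\<forall>y\<in>carrier_vec n. \<exists>x\<in>carrier_vec nc. A *\<^sub>v x = y"
    then have "span (set (cols A)) = carrier V"
      using image by auto
    moreover have "V\<lparr>carrier := carrier V\<rparr> = V"
      by simp
    ultimately show "rank A = n"
      unfolding rank_def using dim_is_n by metis
  qed
qed

lemma rank_le_Suc_if_cols_but_one_subset:
  assumes A: "A \<in> carrier_mat n nc" and N: "N \<in> carrier_mat n nc'"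
    and cols_A: "\<And>c. c < nc \<Longrightarrow> c \<noteq> j \<Longrightarrow> col A c \<in> set (cols N)"
  shows "rank A \<le> rank N + 1"
proof -
  define A_j where "A_j = mat n nc (\<lambda>(r, c). if c = j then A $$ (r, j) else 0)"
  define A_rest where "A_rest = mat n nc (\<lambda>(r, c). if c = j then 0 else A $$ (r, c))"
  have A_j: "A_j \<in> carrier_mat n nc" and A_rest: "A_rest \<in> carrier_mat n nc"
    unfolding A_j_def A_rest_def by auto
  have "A = A_j + A_rest"
    by (rule eq_matI) (use A in \<open>auto simp: A_j_def A_rest_def\<close>)
  then have "rank A \<le> rank A_j + rank A_rest"
    using rank_subadditive[OF A_j A_rest] by simp
  moreover have "rank A_j \<le> 1"
    by (rule rank_le_1_product_entries[OF A_j, of "\<lambda>r. A $$ (r, j)" "\<lambda>c. if c = j then 1 else 0"])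
      (use A_j in \<open>auto simp: A_j_def\<close>)
  moreover have "rank A_rest \<le> rank N"
  proof (rule rank_le_if_cols_subset[OF N A_rest], rule subsetI)
    fix v assume "v \<in> set (cols A_rest)"
    then obtain c where c: "c < nc" "v = col A_rest c"
      using A_rest by (metis cols_length cols_nth in_set_conv_nth carrier_matD(2))
    show "v \<in> insert (0\<^sub>v n) (set (cols N))"
    proof (cases "c = j")
      case True
      then have "v = 0\<^sub>v n"
        using c A_rest by (auto simp: A_rest_def)
      then show ?thesis by simp
    next
      case False
      then have "v = col A c"
        using c A by (auto simp: A_rest_def)
      then show ?thesis
        using cols_A[OF c(1) False] by simp
    qed
  qed
  ultimately show ?thesis
    by linarith
qed

end

lemma full_row_rank_row_block:
  fixes A B :: "'a :: field mat"
  assumes A: "A \<in> carrier_mat n nc" and rank_A: "vec_space.rank n A = n"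
    and B: "B \<in> carrier_mat p nc" and "d + p \<le> n"
    and B_rows: "\<And>i j. i < p \<Longrightarrow> j < nc \<Longrightarrow> B $$ (i, j) = A $$ (i + d, j)"
  shows "vec_space.rank p B = p"
  unfolding vec_space.rank_eq_dim_row_iff_surj[OF B]
proof
  fix y' :: "'a vec" assume y': "y' \<in> carrier_vec p"
  define y where "y = vec n (\<lambda>i. if d \<le> i \<and> i < d + p then y' $ (i - d) else 0)"
  have "y \<in> carrier_vec n"
    unfolding y_def by simp
  then obtain x where x: "x \<in> carrier_vec nc" "A *\<^sub>v x = y"
    using rank_A vec_space.rank_eq_dim_row_iff_surj[OF A] by blast
  have "B *\<^sub>v x = y'"
  proof (rule eq_vecI)
    fix i assume "i < dim_vec y'"
    then have i: "i < p"
      using y' by simp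
    have "(B *\<^sub>v x) $ i = (A *\<^sub>v x) $ (i + d)"
      using i A B x(1) \<open>d + p \<le> n\<close> B_rows by (auto simp: scalar_prod_def intro: sum.cong)
    then show "(B *\<^sub>v x) $ i = y' $ i"
      using x(2) i \<open>d + p \<le> n\<close> unfolding y_def by simp
  qed (use B y' in simp)
  then show "\<exists>x\<in>carrier_vec nc. B *\<^sub>v x = y'"
    using x(1) by blast
qed

lemma mrank_le_dim_row: "mrank A \<le> dim_row A"
  unfolding mrank_def by (rule vec_space.rank_le_dim_row) (rule carrier_matI; simp)

lemma top_rows_carrier: "top_rows p A \<in> carrier_mat p (dim_col A)"
  by (simp add: top_rows_def)

lemma left_cols_carrier: "left_cols q A \<in> carrier_mat (dim_row A) q"
  by (simp add: left_cols_def)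

lemma col_left_cols: "c < q \<Longrightarrow> q \<le> dim_col A \<Longrightarrow> col (left_cols q A) c = col A c"
  by (rule eq_vecI) (simp_all add: left_cols_def)

lemma mrank_left_cols_le:
  assumes "q \<le> dim_col A"
  shows "mrank (left_cols q A) \<le> mrank A"
proof -
  have "set (cols (left_cols q A)) \<subseteq> set (cols A)"
  proof
    fix v assume "v \<in> set (cols (left_cols q A))"
    then obtain c where "c < q" "v = col (left_cols q A) c"
      using left_cols_carrier by (metis cols_length cols_nth in_set_conv_nth carrier_matD(2))
    then show "v \<in> set (cols A)"
      using assms col_left_cols by (metis cols_length cols_nth nth_mem order_less_le_trans)
  qed
  moreover have "dim_row (left_cols q A) = dim_row A"
    by (simp add: left_cols_def)
  ultimately show ?thesis
    unfolding mrank_def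
    using vec_space.rank_le_if_cols_subset[OF carrier_matI[OF refl refl] left_cols_carrier]
    by auto
qed

lemma dim_row_hankel [simp]: "dim_row (hankel m L T u s) = m * L"
  and dim_col_hankel [simp]: "dim_col (hankel m L T u s) = T - L + 1"
  by (simp_all add: hankel_def)

lemma hankel_carrier: "hankel m L T u s \<in> carrier_mat (m * L) (T - L + 1)"
  by (simp add: carrier_matI)

lemma hankel_index:
  "r < m * L \<Longrightarrow> c < T - L + 1 \<Longrightarrow>
    hankel m L T u s $$ (r, c) = u (s - int T + 1 + int c + int (r div m)) $ (r mod m)"
  by (simp add: hankel_def)

lemma hankel_shift_col:
  "r < m * L \<Longrightarrow> Suc c < T - L + 1 \<Longrightarrow>
    hankel m L T u s $$ (r, c) = hankel m L T u (s - 1) $$ (r, Suc c)"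
  by (simp add: hankel_index algebra_simps)

lemma hankel_shift_row:
  assumes "r + m < m * L" and "c < T - L + 1"
  shows "hankel m L T u s $$ (r, c) = hankel m L T u (s - 1) $$ (r + m, c)"
proof -
  have "m > 0"
    using assms(1) by (cases m) auto
  then have "(r + m) div m = r div m + 1" "(r + m) mod m = r mod m"
    by simp_all
  then show ?thesis
    using assms by (simp add: hankel_index algebra_simps)
qed

lemma mrank_top_rows_hankel:
  assumes "L > 0" and "persistently_exciting m L T u (s - 1)"
  shows "mrank (top_rows (m * (L - 1)) (hankel m L T u s)) = m * (L - 1)"
proof -
  have rows: "m + m * (L - 1) \<le> m * L"
    using assms(1) by (cases L) auto
  have "vec_space.rank (m * (L - 1)) (top_rows (m * (L - 1)) (hankel m L T u s)) = m * (L - 1)"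
  proof (rule full_row_rank_row_block[OF hankel_carrier _ _ rows])
    show "vec_space.rank (m * L) (hankel m L T u (s - 1)) = m * L"
      using assms(2) unfolding persistently_exciting_def mrank_def by simp
    show "top_rows (m * (L - 1)) (hankel m L T u s) \<in> carrier_mat (m * (L - 1)) (T - L + 1)"
      using top_rows_carrier[of _ "hankel m L T u s"] by simp
    fix i j assume "i < m * (L - 1)" "j < T - L + 1"
    then show "top_rows (m * (L - 1)) (hankel m L T u s) $$ (i, j) = hankel m L T u (s - 1) $$ (i + m, j)"
      using rows hankel_shift_row by (simp add: top_rows_def)
  qed
  then show ?thesis
    unfolding mrank_def by (simp add: top_rows_def)
qed

lemma mrank_left_cols_hankel_ge:
  assumes "persistently_exciting m L T u (s - 1)"
  shows "m * L - 1 \<le> mrank (left_cols (T - L) (hankel m L T u s))"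
proof -
  let ?H = "hankel m L T u s" and ?H_prev = "hankel m L T u (s - 1)"
  have "vec_space.rank (m * L) ?H_prev \<le> vec_space.rank (m * L) (left_cols (T - L) ?H) + 1"
  proof (rule vec_space.rank_le_Suc_if_cols_but_one_subset[OF hankel_carrier _, where j = 0])
    show "left_cols (T - L) ?H \<in> carrier_mat (m * L) (T - L)"
      using left_cols_carrier[of _ ?H] by simp
    fix c assume "c < T - L + 1" "c \<noteq> 0"
    then obtain c' where c': "c = Suc c'" "c' < T - L"
      by (cases c) auto
    have "col ?H_prev c = col (left_cols (T - L) ?H) c'"
      using c' hankel_shift_col by (intro eq_vecI) (auto simp: col_left_cols)
    then show "col ?H_prev c \<in> set (cols (left_cols (T - L) ?H))"
      using c'(2) left_cols_carrier by (metis cols_length cols_nth nth_mem carrier_matD(2))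
  qed
  then show ?thesis
    using assms unfolding persistently_exciting_def mrank_def by (simp add: left_cols_def)
qed

theorem lemma1:
  fixes m L T :: nat and k :: int and u :: "int \<Rightarrow> real vec"
  assumes "m > 0" and "L > 0" and "T > 0"
    and "T \<ge> (m + 1) * L - 1"
    and "\<And>j. k - int T \<le> j \<Longrightarrow> j \<le> k \<Longrightarrow> dim_vec (u j) = m"
    and "persistently_exciting m L T u (k - 1)"
  shows "mrank (top_rows (m * (L - 1)) (hankel m L T u k)) = m * L - m
    \<and> (m * L - 1 \<le> mrank (left_cols (T - L) (hankel m L T u k))
         \<and> mrank (left_cols (T - L) (hankel m L T u k)) \<le> m * L)
    \<and> (m * L - 1 \<le> mrank (hankel m L T u k) \<and> mrank (hankel m L T u k) \<le> m * L)"
proof -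
  let ?H = "hankel m L T u k"
  have top: "mrank (top_rows (m * (L - 1)) ?H) = m * L - m"
    using mrank_top_rows_hankel[OF assms(2,6)] by (simp add: diff_mult_distrib2)
  have left_ge: "m * L - 1 \<le> mrank (left_cols (T - L) ?H)"
    using mrank_left_cols_hankel_ge[OF assms(6)] .
  have left_le: "mrank (left_cols (T - L) ?H) \<le> mrank ?H"
    by (rule mrank_left_cols_le) simp
  have full_le: "mrank ?H \<le> m * L"
    using mrank_le_dim_row[of ?H] by simp
  show ?thesis
    using top left_ge left_le full_le by linarith
qed

end
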